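(* For all $n\ge 0$, the quadruples of statistics $(\operatorname{asc},\operatorname{des},\operatorname{MNA},\operatorname{MND})$ and $(\operatorname{des},\operatorname{asc},\operatorname{MND},\operatorname{MNA})$ are equidistributed on $S_n(213,312)$, i.e. $$\sum_{\pi\in S_n(213,312)} t_1^{\operatorname{asc}(\pi)}t_2^{\operatorname{des}(\pi)}t_3^{\operatorname{MNA}(\pi)}t_4^{\operatorname{MND}(\pi)}=\sum_{\pi\in S_n(213,312)} t_1^{\operatorname{des}(\pi)}t_2^{\operatorname{asc}(\pi)}t_3^{\operatorname{MND}(\pi)}t_4^{\operatorname{MNA}(\pi)}.$$
   Context: For $n\ge 0$, $S_n$ denotes the set of permutations $\pi=\pi_1\cdots\pi_n$ of $[n]=\{1,\dots,n\}$. $\pi$ avoids a pattern $\tau\in S_k$ if no subsequence $\pi_{i_1}\cdots\pi_{i_k}$ ($i_1<\dots<i_k$) satisfies $\pi_{i_a}<\pi_{i_b}\iff\tau_a<\tau_b$; $S_n(\tau,\rho)$ is the set of permutations in $S_n$ avoiding both $\tau$ and $\rho$. $\operatorname{asc}(\pi)$ (resp. $\operatorname{des}(\pi)$) is the number of $i\in[n-1]$ with $\pi_i<\pi_{i+1}$ (resp. $\pi_i>\pi_{i+1}$). $\operatorname{MNA}(\pi)$ is the maximum size of a set $I\subseteq[n-1]$ such that $\pi_i<\pi_{i+1}$ for all $i\in I$ and $|i-j|\ge 2$ for distinct $i,j\in I$; $\operatorname{MND}(\pi)$ is defined analogously with $\pi_i>\pi_{i+1}$. *)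

theory Defs
  imports "HOL-Combinatorics.Combinatorics"
begin

text \<open>Permutations of [n] are represented as lists (one-line notation),
  positions are 0-indexed.\<close>

definition perms :: "nat \<Rightarrow> nat list set" where
  "perms n = permutations_of_set {1..n}"

definition contains :: "nat list \<Rightarrow> nat list \<Rightarrow> bool" where
  "contains p tau \<longleftrightarrow> (\<exists>idx. length idx = length tau \<and> sorted_wrt (<) idx \<and>
      (\<forall>i\<in>set idx. i < length p) \<and>
      (\<forall>a<length tau. \<forall>b<length tau.
          (p ! (idx ! a) < p ! (idx ! b)) \<longleftrightarrow> (tau ! a < tau ! b)))"

definition avoids :: "nat list \<Rightarrow> nat list \<Rightarrow> bool" where
  "avoids p tau \<longleftrightarrow> \<not> contains p tau"

definition av2 :: "nat \<Rightarrow> nat list \<Rightarrow> nat list \<Rightarrow> nat list set" where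
  "av2 n tau rho = {p \<in> perms n. avoids p tau \<and> avoids p rho}"

definition asc :: "nat list \<Rightarrow> nat" where
  "asc p = card {i. i + 1 < length p \<and> p ! i < p ! (i + 1)}"

definition des :: "nat list \<Rightarrow> nat" where
  "des p = card {i. i + 1 < length p \<and> p ! i > p ! (i + 1)}"

definition MNA :: "nat list \<Rightarrow> nat" where
  "MNA p = Max (card ` {I. I \<subseteq> {i. i + 1 < length p} \<and>
      (\<forall>i\<in>I. p ! i < p ! (i + 1)) \<and>
      (\<forall>i\<in>I. \<forall>j\<in>I. i \<noteq> j \<longrightarrow> 2 \<le> (if i \<le> j then j - i else i - j))})"

definition MND :: "nat list \<Rightarrow> nat" where
  "MND p = Max (card ` {I. I \<subseteq> {i. i + 1 < length p} \<and>
      (\<forall>i\<in>I. p ! i > p ! (i + 1)) \<and>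
      (\<forall>i\<in>I. \<forall>j\<in>I. i \<noteq> j \<longrightarrow> 2 \<le> (if i \<le> j then j - i else i - j))})"

end

theory Submission
  imports Defs
begin

text \<open>Reversal \<pi> \<mapsto> rev \<pi> is an involution of S_n(213,312): it turns an occurrence
  of a pattern \<tau> into one of rev \<tau>, and rev 213 = 312. Reading a permutation backwards
  turns every ascent at position i into a descent at position n - 2 - i, and this reflection
  preserves distances between positions, so asc, des, MNA, MND become des, asc, MND, MNA.\<close>

lemma contains_rev_imp:
  assumes "contains (rev p) tau"
  shows "contains p (rev tau)"
proof -
  obtain idx where len: "length idx = length tau" and sorted: "sorted_wrt (<) idx"
    and bound: "\<forall>i\<in>set idx. i < length p"
    and iso: "\<forall>a<length tau. \<forall>b<length tau.
               (rev p ! (idx ! a) < rev p ! (idx ! b)) \<longleftrightarrow> (tau ! a < tau ! b)"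
    using assms unfolding contains_def by auto
  define m where "m = length tau"
  define idx' where "idx' = rev (map (\<lambda>i. length p - 1 - i) idx)"
  have nth_idx': "idx' ! a = length p - 1 - idx ! (m - 1 - a)" if "a < m" for a
    using that len by (simp add: idx'_def m_def rev_nth)
  have "sorted_wrt (<) idx'"
    unfolding idx'_def sorted_wrt_rev sorted_wrt_map
    by (rule sorted_wrt_mono_rel[OF _ sorted]) (use bound in auto)
  moreover have "\<forall>i\<in>set idx'. i < length p"
    using bound by (auto simp: idx'_def)
  moreover have "(p ! (idx' ! a) < p ! (idx' ! b)) \<longleftrightarrow> (rev tau ! a < rev tau ! b)"
    if "a < m" "b < m" for a b
  proof -
    have "p ! (idx' ! c) = rev p ! (idx ! (m - 1 - c))" if "c < m" for c
      using that bound len nth_mem[of "m - 1 - c" idx]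
      by (simp add: nth_idx' rev_nth m_def Suc_diff_Suc)
    then show ?thesis
      using that iso by (simp add: rev_nth m_def Suc_diff_Suc)
  qed
  ultimately show ?thesis
    unfolding contains_def using len by (intro exI[of _ idx']) (auto simp: idx'_def m_def)
qed

lemma contains_rev_iff: "contains (rev p) tau \<longleftrightarrow> contains p (rev tau)"
  using contains_rev_imp[of p tau] contains_rev_imp[of "rev p" "rev tau"] by auto

lemma rev_in_perms_iff: "rev p \<in> perms n \<longleftrightarrow> p \<in> perms n"
  by (simp add: perms_def permutations_of_set_def)

lemma rev_in_av2_iff: "rev p \<in> av2 n tau rho \<longleftrightarrow> p \<in> av2 n (rev tau) (rev rho)"
  by (simp add: av2_def avoids_def contains_rev_iff rev_in_perms_iff)

lemma av2_commute: "av2 n tau rho = av2 n rho tau"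
  by (auto simp: av2_def)

definition adjacent_positions :: "(nat \<Rightarrow> nat \<Rightarrow> bool) \<Rightarrow> nat list \<Rightarrow> nat set" where
  "adjacent_positions R p = {i. i + 1 < length p \<and> R (p ! i) (p ! (i + 1))}"

definition separated :: "nat set \<Rightarrow> bool" where
  "separated I \<longleftrightarrow> (\<forall>i\<in>I. \<forall>j\<in>I. i \<noteq> j \<longrightarrow> 2 \<le> (if i \<le> j then j - i else i - j))"

definition max_separated :: "(nat \<Rightarrow> nat \<Rightarrow> bool) \<Rightarrow> nat list \<Rightarrow> nat" where
  "max_separated R p = Max (card ` {I. I \<subseteq> adjacent_positions R p \<and> separated I})"

lemma asc_eq_card_adjacent_positions: "asc p = card (adjacent_positions (<) p)"
  by (simp add: asc_def adjacent_positions_def)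

lemma des_eq_card_adjacent_positions: "des p = card (adjacent_positions (>) p)"
  by (simp add: des_def adjacent_positions_def)

lemma MNA_eq_max_separated: "MNA p = max_separated (<) p"
  unfolding MNA_def max_separated_def adjacent_positions_def separated_def
  by (metis (no_types, lifting) mem_Collect_eq subset_iff)

lemma MND_eq_max_separated: "MND p = max_separated (>) p"
  unfolding MND_def max_separated_def adjacent_positions_def separated_def
  by (metis (no_types, lifting) mem_Collect_eq subset_iff)

lemma adjacent_positions_bound: "i \<in> adjacent_positions R p \<Longrightarrow> i + 1 < length p"
  by (simp add: adjacent_positions_def)

lemma mem_adjacent_positions_rev_iff:
  assumes "i + 1 < length p"
  shows "i \<in> adjacent_positions R (rev p) \<longleftrightarrow>
         length p - 2 - i \<in> adjacent_positions (\<lambda>a b. R b a) p"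
proof -
  have "rev p ! i = p ! (length p - 2 - i + 1)" "rev p ! (i + 1) = p ! (length p - 2 - i)"
    using assms by (auto simp: rev_nth intro!: arg_cong[where f = "(!) p"])
  then show ?thesis
    using assms by (auto simp: adjacent_positions_def)
qed

lemma inj_on_reflect: "inj_on (\<lambda>i. n - 2 - i) {i. i + 1 < (n :: nat)}"
  by (rule inj_onI) auto

lemma adjacent_positions_rev:
  "adjacent_positions R (rev p) = (\<lambda>i. length p - 2 - i) ` adjacent_positions (\<lambda>a b. R b a) p"
proof (intro equalityI subsetI)
  fix i assume i: "i \<in> adjacent_positions R (rev p)"
  then have "i + 1 < length p"
    using adjacent_positions_bound by fastforce
  with i show "i \<in> (\<lambda>i. length p - 2 - i) ` adjacent_positions (\<lambda>a b. R b a) p"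
    by (force simp: mem_adjacent_positions_rev_iff)
next
  fix i assume "i \<in> (\<lambda>i. length p - 2 - i) ` adjacent_positions (\<lambda>a b. R b a) p"
  then obtain j where j: "j \<in> adjacent_positions (\<lambda>a b. R b a) p" "i = length p - 2 - j"
    by auto
  moreover have "j + 1 < length p"
    using j adjacent_positions_bound by blast
  ultimately show "i \<in> adjacent_positions R (rev p)"
    using mem_adjacent_positions_rev_iff[of i p R] by (simp add: Suc_diff_Suc)
qed

lemma card_adjacent_positions_rev:
  "card (adjacent_positions R (rev p)) = card (adjacent_positions (\<lambda>a b. R b a) p)"
proof -
  have "inj_on (\<lambda>i. length p - 2 - i) (adjacent_positions (\<lambda>a b. R b a) p)"
    by (rule inj_on_subset[OF inj_on_reflect]) (auto dest: adjacent_positions_bound)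
  then show ?thesis
    by (simp add: adjacent_positions_rev card_image)
qed

lemma separated_image_iff:
  assumes isometric: "\<And>i j. i \<in> I \<Longrightarrow> j \<in> I \<Longrightarrow>
      (if f i \<le> f j then f j - f i else f i - f j) = (if i \<le> j then j - i else i - j)"
  shows "separated (f ` I) \<longleftrightarrow> separated I"
proof -
  have "f i = f j \<longleftrightarrow> i = j" if "i \<in> I" "j \<in> I" for i j
    using isometric[OF that] by (auto split: if_splits)
  then show ?thesis
    unfolding separated_def Ball_image_comp o_def
    by (intro ball_cong refl) (simp only: isometric)
qed

lemma separated_reflect:
  assumes "I \<subseteq> {i. i + 1 < n}"
  shows "separated ((\<lambda>i. n - 2 - i) ` I) \<longleftrightarrow> separated I"
  by (rule separated_image_iff) (use assms in auto)

lemma max_separated_rev: "max_separated R (rev p) = max_separated (\<lambda>a b. R b a) p"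
proof -
  let ?f = "\<lambda>i. length p - 2 - i"
  let ?A = "adjacent_positions (\<lambda>a b. R b a) p"
  let ?F = "{J. J \<subseteq> ?A \<and> separated J}"
  have A_bound: "?A \<subseteq> {i. i + 1 < length p}"
    by (auto dest: adjacent_positions_bound)
  have families: "{I. I \<subseteq> adjacent_positions R (rev p) \<and> separated I} = (`) ?f ` ?F"
  proof (intro equalityI subsetI)
    fix I assume "I \<in> {I. I \<subseteq> adjacent_positions R (rev p) \<and> separated I}"
    then obtain J where "J \<subseteq> ?A" "I = ?f ` J" "separated I"
      by (auto simp: adjacent_positions_rev subset_image_iff)
    moreover have "separated J"
      using calculation A_bound separated_reflect[of J "length p"] by auto
    ultimately show "I \<in> (`) ?f ` ?F"
      by auto
  next
    fix I assume "I \<in> (`) ?f ` ?F"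
    then obtain J where "J \<subseteq> ?A" "separated J" "I = ?f ` J"
      by auto
    then show "I \<in> {I. I \<subseteq> adjacent_positions R (rev p) \<and> separated I}"
      using A_bound separated_reflect[of J "length p"]
      by (auto simp: adjacent_positions_rev)
  qed
  have "card (?f ` J) = card J" if "J \<in> ?F" for J
    using that A_bound inj_on_subset[OF inj_on_reflect] by (auto intro!: card_image)
  then have "card ` (`) ?f ` ?F = card ` ?F"
    unfolding image_image by (rule image_cong[OF refl])
  then show ?thesis
    unfolding max_separated_def families by (rule arg_cong)
qed

lemma rev_av2_213_312: "rev p \<in> av2 n [2,1,3] [3,1,2] \<longleftrightarrow> p \<in> av2 n [2,1,3] [3,1,2]"
  using rev_in_av2_iff[of p n "[2,1,3]" "[3,1,2]"] av2_commute[of n "[3,1,2]" "[2,1,3]"] by simp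

theorem theorem14:
  fixes n :: nat and t1 t2 t3 t4 :: "'a :: comm_semiring_1"
  shows "(\<Sum>\<pi>\<in>av2 n [2,1,3] [3,1,2].
            t1 ^ asc \<pi> * t2 ^ des \<pi> * t3 ^ MNA \<pi> * t4 ^ MND \<pi>)
       = (\<Sum>\<pi>\<in>av2 n [2,1,3] [3,1,2].
            t1 ^ des \<pi> * t2 ^ asc \<pi> * t3 ^ MND \<pi> * t4 ^ MNA \<pi>)"
proof -
  have closed: "rev \<pi> \<in> av2 n [2,1,3] [3,1,2]" if "\<pi> \<in> av2 n [2,1,3] [3,1,2]" for \<pi>
    using that rev_av2_213_312 by blast
  have "asc (rev \<pi>) = des \<pi>" "des (rev \<pi>) = asc \<pi>" for \<pi>
    by (simp_all add: asc_eq_card_adjacent_positions des_eq_card_adjacent_positions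
        card_adjacent_positions_rev)
  moreover have "MNA (rev \<pi>) = MND \<pi>" "MND (rev \<pi>) = MNA \<pi>" for \<pi>
    by (simp_all add: MNA_eq_max_separated MND_eq_max_separated max_separated_rev)
  ultimately show ?thesis
    using closed by (intro sum.reindex_bij_witness[where i = rev and j = rev]) auto
qed

end
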